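(* Every graph $G$ with $n$ vertices has an $xy^+$-monotone EPG-representation in a $3n\times 2n$-grid.
   Context: The $w\times h$-grid consists of all grid-points $(i,j)$ with integer coordinates $1\le i\le w$, $1\le j\le h$, and all grid-edges joining grid-points at distance $1$. An EPG-representation of a graph $G$ assigns to each vertex $v$ a path $\mathrm{path}(v)$ in the grid such that $(v,w)$ is an edge of $G$ if and only if $\mathrm{path}(v)$ and $\mathrm{path}(w)$ share a grid-edge. A grid path is $xy$-monotone if every vertical line and every horizontal line meeting it meets it in a single interval; it is $xy^+$-monotone if it is $xy$-monotone and its left endpoint is not above its right endpoint. An $xy^+$-monotone EPG-representation is one in which all vertex-paths are $xy^+$-monotone. *)

theory Defs
  imports "HOL-Analysis.Analysis"
begin

type_synonym gpoint = "int \<times> int"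

definition in_grid :: "nat \<Rightarrow> nat \<Rightarrow> gpoint \<Rightarrow> bool" where
  "in_grid w h p \<longleftrightarrow> 1 \<le> fst p \<and> fst p \<le> int w \<and> 1 \<le> snd p \<and> snd p \<le> int h"

definition grid_adj :: "gpoint \<Rightarrow> gpoint \<Rightarrow> bool" where
  "grid_adj p q \<longleftrightarrow> \<bar>fst p - fst q\<bar> + \<bar>snd p - snd q\<bar> = 1"

definition grid_path :: "nat \<Rightarrow> nat \<Rightarrow> gpoint list \<Rightarrow> bool" where
  "grid_path w h ps \<longleftrightarrow> length ps \<ge> 2 \<and> distinct ps \<and> (\<forall>p\<in>set ps. in_grid w h p)
     \<and> (\<forall>i. Suc i < length ps \<longrightarrow> grid_adj (ps ! i) (ps ! Suc i))"

definition path_edges :: "gpoint list \<Rightarrow> gpoint set set" where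
  "path_edges ps = {{ps ! i, ps ! Suc i} | i. Suc i < length ps}"

definition to_real2 :: "gpoint \<Rightarrow> real \<times> real" where
  "to_real2 p = (real_of_int (fst p), real_of_int (snd p))"

definition path_points :: "gpoint list \<Rightarrow> (real \<times> real) set" where
  "path_points ps = (\<Union>i\<in>{i. Suc i < length ps}. closed_segment (to_real2 (ps ! i)) (to_real2 (ps ! Suc i)))
                     \<union> to_real2 ` set ps"

definition xy_monotone :: "gpoint list \<Rightarrow> bool" where
  "xy_monotone ps \<longleftrightarrow>
     (\<forall>c::real. is_interval {y. (c, y) \<in> path_points ps} \<and> is_interval {x. (x, c) \<in> path_points ps})"

text \<open>xy+-monotone: xy-monotone and the left endpoint is not above the right endpoint.
  With endpoints p = first and q = last point, this means one can name them left/right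
  so that the left one is weakly left of and weakly below the right one.\<close>
definition xy_plus_monotone :: "gpoint list \<Rightarrow> bool" where
  "xy_plus_monotone ps \<longleftrightarrow> xy_monotone ps \<and>
     (let p = hd ps; q = last ps in
        (fst p \<le> fst q \<and> snd p \<le> snd q) \<or> (fst q \<le> fst p \<and> snd q \<le> snd p))"

definition EPG_rep :: "'v set \<Rightarrow> ('v \<Rightarrow> 'v \<Rightarrow> bool) \<Rightarrow> nat \<Rightarrow> nat \<Rightarrow> ('v \<Rightarrow> gpoint list) \<Rightarrow> bool" where
  "EPG_rep V E w h pth \<longleftrightarrow> (\<forall>v\<in>V. grid_path w h (pth v)) \<and>
     (\<forall>v\<in>V. \<forall>u\<in>V. v \<noteq> u \<longrightarrow> (E v u \<longleftrightarrow> path_edges (pth v) \<inter> path_edges (pth u) \<noteq> {}))"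

end

theory Submission
  imports Defs
begin

text \<open>Number the vertices \<open>1, \<dots>, n\<close>. Vertex \<open>i\<close> gets a staircase starting at
  \<open>(1, 2i)\<close>: it runs along row \<open>2i\<close> up to \<open>x = 3i\<close> and then climbs, each row \<open>2j\<close>
  (\<open>j > i\<close>) being left at \<open>x = 2i + j\<close>. Row \<open>2j\<close> is entered at \<open>x = 2i + j - 1\<close> if \<open>i\<close> and \<open>j\<close>
  are adjacent and at \<open>x = 2i + j\<close> otherwise; in the first case the staircase uses the
  grid-edge \<open>(2i + j - 1, 2j) -- (2i + j, 2j)\<close>, which lies on the initial horizontal run of
  vertex \<open>j\<close>. Staircases \<open>i < j\<close> can only meet on row \<open>2j\<close>, so this is the only edge they
  may share. Every step goes right or up, which makes the paths \<open>xy\<^sup>+\<close>-monotone.\<close>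

lemma to_real2_mono: "p \<le> q \<Longrightarrow> to_real2 p \<le> to_real2 q"
  by (simp add: to_real2_def less_eq_prod_def)

lemma path_points_Nil [simp]: "path_points [] = {}"
  by (simp add: path_points_def)

lemma path_points_singleton [simp]: "path_points [p] = {to_real2 p}"
  by (simp add: path_points_def)

lemma path_points_Cons_Cons:
  "path_points (p # q # ps) = closed_segment (to_real2 p) (to_real2 q) \<union> path_points (q # ps)"
proof -
  have "{i. Suc i < length (p # q # ps)} = insert 0 (Suc ` {i. Suc i < length (q # ps)})"
    by (auto simp: image_iff) (case_tac x; auto)
  then show ?thesis
    unfolding path_points_def by auto
qed

lemma path_points_subset_convex:
  assumes "convex S" "to_real2 ` set ps \<subseteq> S"
  shows "path_points ps \<subseteq> S"
proof -
  have "closed_segment (to_real2 (ps ! i)) (to_real2 (ps ! Suc i)) \<subseteq> S" if "Suc i < length ps" for i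
    using that assms by (intro closed_segment_subset) (auto simp: image_subset_iff)
  then show ?thesis
    using assms(2) unfolding path_points_def by blast
qed

lemma to_real2_swap: "to_real2 (prod.swap p) = prod.swap (to_real2 p)"
  by (simp add: to_real2_def)

lemma path_points_map_swap: "path_points (map prod.swap ps) = prod.swap ` path_points ps"
proof -
  have "linear (prod.swap :: real \<times> real \<Rightarrow> _)"
    by (auto intro: linearI)
  then have seg: "closed_segment (prod.swap a) (prod.swap b) = prod.swap ` closed_segment a b"
    for a b :: "real \<times> real"
    by (rule closed_segment_linear_image)
  show ?thesis
  proof (induction ps rule: induct_list012)
    case (3 p q ps)
    then show ?case
      by (simp add: path_points_Cons_Cons image_Un seg to_real2_swap)
  qed (simp_all add: to_real2_swap)
qed

lemma is_interval_vertical_slice_convex: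
  fixes S :: "(real \<times> real) set"
  assumes "convex S"
  shows "is_interval {y. (c, y) \<in> S}"
proof -
  have "{y. (c, y) \<in> S} = snd ` (S \<inter> {c} \<times> UNIV)"
    by force
  moreover have "convex (snd ` (S \<inter> {c} \<times> UNIV))"
    by (intro convex_linear_image convex_Int convex_Times assms linear_snd) auto
  ultimately show ?thesis
    by (simp add: is_interval_convex_1)
qed

lemma is_interval_vertical_slice_Un:
  fixes S T :: "(real \<times> real) set"
  assumes "is_interval {y. (c, y) \<in> S}" "is_interval {y. (c, y) \<in> T}"
    and "S \<subseteq> {..r}" "T \<subseteq> {r..}" "r \<in> S" "r \<in> T"
  shows "is_interval {y. (c, y) \<in> S \<union> T}"
proof (cases "{y. (c, y) \<in> S} = {} \<or> {y. (c, y) \<in> T} = {}")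
  case True
  then show ?thesis
    using assms(1,2) by (auto simp: Collect_disj_eq)
next
  case False
  then obtain y1 y2 where "(c, y1) \<in> S" "(c, y2) \<in> T"
    by auto
  with assms(3,4) have "(c, y1) \<le> r" "r \<le> (c, y2)"
    by auto
  then have "r = (c, snd r)"
    by (auto simp: less_eq_prod_def prod_eq_iff)
  with assms(5,6) have "snd r \<in> {y. (c, y) \<in> S} \<inter> {y. (c, y) \<in> T}"
    by (metis IntI mem_Collect_eq)
  then have "connected ({y. (c, y) \<in> S} \<union> {y. (c, y) \<in> T})"
    using assms(1,2) by (intro connected_Un) (auto simp: is_interval_connected_1)
  then show ?thesis
    by (simp add: Collect_disj_eq is_interval_connected_1)
qed

text \<open>The order on grid points is the componentwise one, so a sorted list of grid points
  is a path that only goes right and up.\<close>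

lemma staircase_vertical_slice:
  "sorted_wrt (\<le>) ps \<Longrightarrow> is_interval {y. (c, y) \<in> path_points ps}"
proof (induction ps rule: induct_list012)
  case (2 p)
  show ?case
    unfolding path_points_singleton by (rule is_interval_vertical_slice_convex[OF convex_singleton])
next
  case (3 p q ps)
  then have sorted: "sorted_wrt (\<le>) (q # ps)" and "p \<le> q" and "\<forall>z\<in>set ps. q \<le> z"
    by simp_all
  have "to_real2 ` set (q # ps) \<subseteq> {to_real2 q..}"
    using \<open>\<forall>z\<in>set ps. q \<le> z\<close> by (simp add: image_subset_iff to_real2_mono)
  then have "path_points (q # ps) \<subseteq> {to_real2 q..}"
    by (intro path_points_subset_convex is_interval_convex is_interval_ci)
  moreover have "closed_segment (to_real2 p) (to_real2 q) \<subseteq> {..to_real2 q}"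
    using \<open>p \<le> q\<close> by (intro closed_segment_subset is_interval_convex is_interval_ic) (auto intro: to_real2_mono)
  moreover have "to_real2 q \<in> path_points (q # ps)"
    by (simp add: path_points_def)
  ultimately show ?case
    unfolding path_points_Cons_Cons
    by (intro is_interval_vertical_slice_Un[where r = "to_real2 q"] "3.IH"(2)[OF sorted]
        is_interval_vertical_slice_convex[OF convex_closed_segment]) auto
qed simp

lemma staircase_xy_monotone:
  assumes "sorted_wrt (\<le>) ps"
  shows "xy_monotone ps"
proof -
  have "sorted_wrt (\<le>) (map prod.swap ps)"
    unfolding sorted_wrt_map by (rule sorted_wrt_mono_rel[OF _ assms]) (auto simp: less_eq_prod_def)
  then have "is_interval {x. (c, x) \<in> path_points (map prod.swap ps)}" for c
    by (rule staircase_vertical_slice)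
  moreover have "{x. (c, x) \<in> path_points (map prod.swap ps)} = {x. (x, c) \<in> path_points ps}" for c
    by (force simp: path_points_map_swap)
  ultimately show ?thesis
    unfolding xy_monotone_def using staircase_vertical_slice[OF assms] by simp
qed

lemma staircase_xy_plus_monotone:
  assumes "sorted_wrt (\<le>) ps" "ps \<noteq> []"
  shows "xy_plus_monotone ps"
proof -
  obtain p qs where ps: "ps = p # qs"
    using assms(2) by (cases ps) auto
  have "hd ps \<le> last ps"
    using assms(1) ps by (cases qs) auto
  then show ?thesis
    unfolding xy_plus_monotone_def using staircase_xy_monotone[OF assms(1)]
    by (simp add: less_eq_prod_def)
qed

lemma div2_bounds: "y - 1 \<le> 2 * (y div 2)" "2 * (y div 2) \<le> y" for y :: int
  by linarith+

text \<open>The staircase of vertex \<open>i\<close> leaves row \<open>y\<close> at \<open>x = row_end A i y\<close>; the odd row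
  \<open>2j - 1\<close> is left one step early exactly when \<open>i\<close> and \<open>j\<close> are adjacent.\<close>

definition row_end :: "(int \<Rightarrow> int \<Rightarrow> bool) \<Rightarrow> int \<Rightarrow> int \<Rightarrow> int" where
  "row_end A i y = 2 * i + y div 2 + (if odd y \<and> \<not> A i ((y + 1) div 2) then 1 else 0)"

lemma row_end_bounds: "2 * i + y div 2 \<le> row_end A i y" "row_end A i y \<le> 2 * i + (y + 1) div 2"
  by (auto simp: row_end_def elim!: oddE)

lemma row_end_even: "even y \<Longrightarrow> row_end A i y = 2 * i + y div 2"
  by (simp add: row_end_def)

lemma row_end_below_row:
  "row_end A i (2 * j - 1) = (if A i j then 2 * i + j - 1 else 2 * i + j)"
proof -
  have "(2 * j - 1) div 2 = j - 1" "(2 * j - 1 + 1) div 2 = j" "odd (2 * j - 1)"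
    by simp_all
  then show ?thesis
    by (simp add: row_end_def)
qed

lemma row_end_row: "row_end A i (2 * j) = 2 * i + j"
  by (simp add: row_end_even)

lemma row_end_mono:
  assumes "y \<le> y'"
  shows "row_end A i y \<le> row_end A i y'"
proof (cases "y = y'")
  case False
  with assms have "(y + 1) div 2 \<le> y' div 2"
    by (intro zdiv_mono1) auto
  moreover have "row_end A i y \<le> 2 * i + (y + 1) div 2" "2 * i + y' div 2 \<le> row_end A i y'"
    by (rule row_end_bounds)+
  ultimately show ?thesis
    by linarith
qed simp

fun stair :: "(int \<Rightarrow> int \<Rightarrow> bool) \<Rightarrow> int \<Rightarrow> nat \<Rightarrow> gpoint" where
  "stair A i 0 = (1, 2 * i)"
| "stair A i (Suc k) =
     (case stair A i k of (x, y) \<Rightarrow> if x < row_end A i y then (x + 1, y) else (x, y + 1))"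

declare stair.simps(2) [simp del]

lemma stair_Suc_cases:
  obtains "stair A i (Suc k) = (fst (stair A i k) + 1, snd (stair A i k))"
  | "stair A i (Suc k) = (fst (stair A i k), snd (stair A i k) + 1)"
proof -
  obtain x y where "stair A i k = (x, y)"
    by fastforce
  then show thesis
    using that by (cases "x < row_end A i y") (auto simp: stair.simps(2))
qed

lemma stair_le_Suc: "stair A i k \<le> stair A i (Suc k)"
  by (cases rule: stair_Suc_cases[of A i k]) (simp_all add: less_eq_prod_def)

text \<open>Closed form of the staircase: row \<open>y\<close> is covered from the exit of row \<open>y - 1\<close> to
  the exit of row \<open>y\<close>.\<close>

definition on_stair :: "(int \<Rightarrow> int \<Rightarrow> bool) \<Rightarrow> int \<Rightarrow> gpoint \<Rightarrow> bool" where
  "on_stair A i p \<longleftrightarrow> 2 * i \<le> snd p \<and> fst p \<le> row_end A i (snd p) \<and>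
     (if snd p = 2 * i then 1 \<le> fst p else row_end A i (snd p - 1) \<le> fst p)"

lemma on_stair_stair:
  assumes "1 \<le> i"
  shows "on_stair A i (stair A i k) \<and> fst (stair A i k) + snd (stair A i k) = 2 * i + 1 + int k"
proof (induction k)
  case 0
  then show ?case
    using assms by (simp add: on_stair_def row_end_even)
next
  case (Suc k)
  obtain x y where xy: "stair A i k = (x, y)"
    by fastforce
  show ?case
  proof (cases "x < row_end A i y")
    case True
    then show ?thesis
      using Suc xy by (auto simp: stair.simps(2) on_stair_def)
  next
    case False
    with Suc xy have "x = row_end A i y"
      by (simp add: on_stair_def)
    moreover have "row_end A i y \<le> row_end A i (y + 1)"
      by (simp add: row_end_mono)
    ultimately show ?thesis
      using Suc xy False by (auto simp: stair.simps(2) on_stair_def)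
  qed
qed

lemma on_stair_unique:
  assumes "on_stair A i p" "on_stair A i q" "fst p + snd p = fst q + snd q"
  shows "p = q"
proof -
  have False if "on_stair A i p" "on_stair A i q" "snd p < snd q" "fst p + snd p = fst q + snd q"
    for p q
  proof -
    have "fst p \<le> row_end A i (snd p)"
      using that(1) by (simp add: on_stair_def)
    also have "\<dots> \<le> row_end A i (snd q - 1)"
      using that(3) by (simp add: row_end_mono)
    also have "\<dots> \<le> fst q"
      using that(1-3) by (auto simp: on_stair_def)
    finally show False
      using that(3,4) by linarith
  qed
  then have "snd p = snd q"
    using assms by (metis linorder_neqE)
  then show ?thesis
    using assms(3) by (simp add: prod_eq_iff)
qed

lemma stair_eq_iff:
  assumes "1 \<le> i"
  shows "stair A i k = p \<longleftrightarrow> on_stair A i p \<and> fst p + snd p = 2 * i + 1 + int k"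
  using on_stair_stair[OF assms] on_stair_unique by metis

lemma on_stair_row:
  assumes "on_stair A i z" "on_stair A j z" "i < j"
  shows "snd z = 2 * j"
proof (rule ccontr)
  assume "snd z \<noteq> 2 * j"
  with assms have "2 * j < snd z" "row_end A j (snd z - 1) \<le> fst z" "fst z \<le> row_end A i (snd z)"
    by (auto simp: on_stair_def)
  moreover have "2 * j + (snd z - 1) div 2 \<le> row_end A j (snd z - 1)"
    "row_end A i (snd z) \<le> 2 * i + (snd z + 1) div 2"
    by (rule row_end_bounds)+
  moreover have "(snd z + 1) div 2 = (snd z - 1) div 2 + 1"
    by linarith
  ultimately show False
    using assms(3) by linarith
qed

definition stair_path :: "(int \<Rightarrow> int \<Rightarrow> bool) \<Rightarrow> nat \<Rightarrow> int \<Rightarrow> gpoint list" where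
  "stair_path A n i = map (stair A i) [0..<3 * n]"

lemma path_edges_stair_path:
  "path_edges (stair_path A n i) = {{stair A i k, stair A i (Suc k)} | k. Suc k < 3 * n}"
  unfolding path_edges_def setcompr_eq_image
  by (intro image_cong) (auto simp: stair_path_def simp del: upt_Suc)

lemma stair_in_grid:
  assumes "1 \<le> i" "i \<le> int n" "k < 3 * n"
  shows "in_grid (3 * n) (2 * n) (stair A i k)"
proof -
  obtain x y where xy: "stair A i k = (x, y)"
    by fastforce
  then have on: "on_stair A i (x, y)" and sum: "x + y = 2 * i + 1 + int k"
    using on_stair_stair[OF assms(1), of A k] by auto
  have row_bounds: "2 * i + (y - 1) div 2 \<le> row_end A i (y - 1)" "row_end A i y \<le> 2 * i + (y + 1) div 2"
    by (rule row_end_bounds)+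
  have x_upper: "x \<le> 2 * i + (y + 1) div 2"
    using on row_bounds(2) by (simp add: on_stair_def)
  have x_lower: "2 * i + (y - 1) div 2 \<le> x" if "y \<noteq> 2 * i"
    using on that row_bounds(1) by (simp add: on_stair_def)
  have "1 \<le> x \<and> y \<le> 2 * int n"
  proof (cases "y = 2 * i")
    case True
    with on assms show ?thesis
      by (simp add: on_stair_def)
  next
    case False
    with on x_lower have "2 * i < y" "2 * i + (y - 1) div 2 \<le> x"
      by (simp_all add: on_stair_def)
    then show ?thesis
      using sum assms div2_bounds[of "y - 1"] by linarith
  qed
  moreover have "2 * i \<le> y"
    using on by (simp add: on_stair_def)
  ultimately show ?thesis
    using x_upper assms div2_bounds[of "y + 1"] by (simp add: xy in_grid_def)
qed

lemma stair_path_grid_path: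
  assumes "1 \<le> i" "i \<le> int n"
  shows "grid_path (3 * n) (2 * n) (stair_path A n i)"
proof -
  have "inj (stair A i)"
  proof (rule injI)
    fix k l
    assume eq: "stair A i k = stair A i l"
    have "fst (stair A i k) + snd (stair A i k) = 2 * i + 1 + int k"
      "fst (stair A i l) + snd (stair A i l) = 2 * i + 1 + int l"
      using on_stair_stair[OF assms(1)] by blast+
    then show "k = l"
      unfolding eq by simp
  qed
  then have "inj_on (stair A i) {0..<3 * n}"
    by (rule inj_on_subset) simp
  then have "distinct (stair_path A n i)"
    by (simp add: stair_path_def distinct_map)
  moreover have "grid_adj (stair_path A n i ! k) (stair_path A n i ! Suc k)"
    if "Suc k < length (stair_path A n i)" for k
    using that by (cases rule: stair_Suc_cases[of A i k]) (simp_all add: stair_path_def grid_adj_def)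
  moreover have "\<forall>p\<in>set (stair_path A n i). in_grid (3 * n) (2 * n) p"
    using stair_in_grid[OF assms] by (auto simp: stair_path_def)
  moreover have "2 \<le> length (stair_path A n i)"
    using assms by (simp add: stair_path_def)
  ultimately show ?thesis
    unfolding grid_path_def by blast
qed

lemma stair_path_xy_plus_monotone:
  assumes "1 \<le> n"
  shows "xy_plus_monotone (stair_path A n i)"
proof (rule staircase_xy_plus_monotone)
  have "stair A i k \<le> stair A i l" if "k \<le> l" for k l
    using that by (rule lift_Suc_mono_le[of "stair A i", OF stair_le_Suc])
  then show "sorted_wrt (\<le>) (stair_path A n i)"
    unfolding stair_path_def sorted_wrt_map
    by (rule sorted_wrt_mono_rel[OF _ sorted_wrt_upt]) simp
  show "stair_path A n i \<noteq> []"
    using assms by (simp add: stair_path_def)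
qed

lemma stair_path_edgeI:
  assumes "1 \<le> i" "on_stair A i p" "on_stair A i q"
    and "fst q + snd q = fst p + snd p + 1" "fst q + snd q \<le> 2 * i + 3 * int n"
  shows "{p, q} \<in> path_edges (stair_path A n i)"
proof -
  define k where "k = nat (fst p + snd p - 2 * i - 1)"
  have "2 * i + (snd p - 1) div 2 \<le> row_end A i (snd p - 1)"
    by (rule row_end_bounds)
  then have "2 * i + 1 \<le> fst p + snd p"
    using assms(1,2) div2_bounds[of "snd p - 1"] by (auto simp: on_stair_def split: if_splits)
  then have "int k = fst p + snd p - 2 * i - 1"
    by (simp add: k_def)
  then have "stair A i k = p" "stair A i (Suc k) = q" "Suc k < 3 * n"
    using assms by (simp_all add: stair_eq_iff)
  then show ?thesis
    unfolding path_edges_stair_path by blast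
qed

lemma stair_paths_share_edge_iff:
  assumes "1 \<le> i" "i < j" "j \<le> int n"
  shows "path_edges (stair_path A n i) \<inter> path_edges (stair_path A n j) \<noteq> {} \<longleftrightarrow> A i j"
proof
  assume "path_edges (stair_path A n i) \<inter> path_edges (stair_path A n j) \<noteq> {}"
  then obtain k l where edge: "{stair A i k, stair A i (Suc k)} = {stair A j l, stair A j (Suc l)}"
    unfolding path_edges_stair_path by blast
  have on_i: "on_stair A i (stair A i k)" "on_stair A i (stair A i (Suc k))"
    using on_stair_stair assms(1) by blast+
  have "on_stair A j (stair A j l)" "on_stair A j (stair A j (Suc l))"
    using on_stair_stair assms by auto
  with edge have on_j: "on_stair A j (stair A i k)" "on_stair A j (stair A i (Suc k))"
    by (auto simp: doubleton_eq_iff)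
  have row: "snd (stair A i k) = 2 * j" "snd (stair A i (Suc k)) = 2 * j"
    using on_stair_row[OF on_i(1) on_j(1) assms(2)] on_stair_row[OF on_i(2) on_j(2) assms(2)] .
  then have "fst (stair A i (Suc k)) = fst (stair A i k) + 1"
    by (cases rule: stair_Suc_cases[of A i k]) simp_all
  moreover have "row_end A i (2 * j - 1) \<le> fst (stair A i k)"
    "fst (stair A i (Suc k)) \<le> row_end A i (2 * j)"
    using on_i row assms(2) by (simp_all add: on_stair_def)
  ultimately show "A i j"
    unfolding row_end_below_row row_end_row by (auto split: if_splits)
next
  assume "A i j"
  let ?p = "(2 * i + j - 1, 2 * j)" and ?q = "(2 * i + j, 2 * j)"
  have "on_stair A i ?p" "on_stair A i ?q" "on_stair A j ?p" "on_stair A j ?q"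
    using assms \<open>A i j\<close> by (simp_all add: on_stair_def row_end_below_row row_end_row)
  then have "{?p, ?q} \<in> path_edges (stair_path A n i)" "{?p, ?q} \<in> path_edges (stair_path A n j)"
    using assms by (simp_all add: stair_path_edgeI)
  then show "path_edges (stair_path A n i) \<inter> path_edges (stair_path A n j) \<noteq> {}"
    by blast
qed

lemma EPG_rep_stair_paths:
  assumes "\<And>i j. A i j \<Longrightarrow> A j i"
  shows "EPG_rep {1..int n} A (3 * n) (2 * n) (stair_path A n)"
  unfolding EPG_rep_def
proof (intro conjI ballI impI)
  fix i
  assume "i \<in> {1..int n}"
  then show "grid_path (3 * n) (2 * n) (stair_path A n i)"
    by (simp add: stair_path_grid_path)
next
  fix i j
  assume ij: "i \<in> {1..int n}" "j \<in> {1..int n}" "i \<noteq> j"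
  then consider "i < j" | "j < i"
    by linarith
  then show "A i j \<longleftrightarrow> path_edges (stair_path A n i) \<inter> path_edges (stair_path A n j) \<noteq> {}"
  proof cases
    case 1
    with ij show ?thesis
      by (simp add: stair_paths_share_edge_iff)
  next
    case 2
    with ij have "path_edges (stair_path A n j) \<inter> path_edges (stair_path A n i) \<noteq> {} \<longleftrightarrow> A j i"
      by (simp add: stair_paths_share_edge_iff)
    then show ?thesis
      using assms by (metis Int_commute)
  qed
qed

lemma EPG_rep_comp:
  assumes "EPG_rep W A w h pth" "inj_on f V" "f ` V \<subseteq> W"
    and "\<And>u v. u \<in> V \<Longrightarrow> v \<in> V \<Longrightarrow> E u v \<longleftrightarrow> A (f u) (f v)"
  shows "EPG_rep V E w h (pth \<circ> f)"
  unfolding EPG_rep_def comp_def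
proof (intro conjI ballI)
  fix v
  assume "v \<in> V"
  then show "grid_path w h (pth (f v))"
    using assms(1,3) by (auto simp: EPG_rep_def)
next
  fix v u
  assume "v \<in> V" "u \<in> V"
  moreover from this have "f v \<in> W" "f u \<in> W" "v \<noteq> u \<Longrightarrow> f v \<noteq> f u"
    using assms(2,3) by (auto simp: inj_on_def)
  ultimately show "v \<noteq> u \<longrightarrow> (E v u \<longleftrightarrow> path_edges (pth (f v)) \<inter> path_edges (pth (f u)) \<noteq> {})"
    using assms(1,4) unfolding EPG_rep_def by blast
qed

theorem theorem3:
  fixes V :: "'v set" and E :: "'v \<Rightarrow> 'v \<Rightarrow> bool" and n :: nat
  assumes "finite V" and "card V = n"
    and "\<And>u v. E u v \<Longrightarrow> u \<in> V \<and> v \<in> V"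
    and "\<And>u v. E u v \<Longrightarrow> E v u"
    and "\<And>v. \<not> E v v"
  shows "\<exists>pth. EPG_rep V E (3 * n) (2 * n) pth \<and> (\<forall>v\<in>V. xy_plus_monotone (pth v))"
proof -
  obtain f where f: "bij_betw f V {1..int n}"
    using finite_same_card_bij[OF assms(1)] assms(2) by force
  define A where "A i j \<longleftrightarrow> E (inv_into V f i) (inv_into V f j)" for i j
  have "E u v \<longleftrightarrow> A (f u) (f v)" if "u \<in> V" "v \<in> V" for u v
    using that f by (simp add: A_def bij_betw_inv_into_left)
  moreover have "EPG_rep {1..int n} A (3 * n) (2 * n) (stair_path A n)"
    using assms(4) by (intro EPG_rep_stair_paths) (simp add: A_def)
  ultimately have "EPG_rep V E (3 * n) (2 * n) (stair_path A n \<circ> f)"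
    using EPG_rep_comp bij_betw_imp_inj_on[OF f] equalityD1[OF bij_betw_imp_surj_on[OF f]] by blast
  moreover have "xy_plus_monotone ((stair_path A n \<circ> f) v)" if "v \<in> V" for v
  proof -
    have "0 < n"
      using that assms(1,2) card_gt_0_iff by blast
    then show ?thesis
      by (simp add: stair_path_xy_plus_monotone)
  qed
  ultimately show ?thesis
    by blast
qed

end
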